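(* Let $K$ be a simplicial complex with weight function $w_K\equiv1$, and let $L$ be a subcomplex of $K$ with $S_n(L)=S_n(K)$, equipped with a weight function $w_L$ taking values in $\{0,1\}$. Let $\theta_1\le\theta_2\le\dots$ and $\lambda_1\le\lambda_2\le\dots$ be the eigenvalues of $\mathcal{L}^{up}_n(L,w_L)$ and $\mathcal{L}^{up}_n(K,w_K)$, respectively. Then $\theta_k\le\lambda_k$ for every $k$.
   Context: $S_j(K)$ is the set of $j$-faces; $C^j(K,\mathbb{R})$ the real cochains on oriented $j$-faces, coboundary $(\delta_j f)([v_0,\dots,v_{j+1}])=\sum_i(-1)^if([v_0,\dots,\hat v_i,\dots,v_{j+1}])$. For a weight function $w\ge0$ on faces, $(f,g)=\sum_{F\in S_j}w(F)f([F])g([F])$ and the formal adjoint is $(\delta_j^*\bar f)([F])=\sum_{\bar F\in S_{j+1},\bar F\supset F}\frac{w(\bar F)}{w(F)}\mathrm{sgn}([F],\partial[\bar F])\bar f([\bar F])$ if $w(F)\ne0$, and $0$ if $w(F)=0$, where $\mathrm{sgn}([v_0,..,\hat v_i,..,v_{j+1}],\partial[v_0,..,v_{j+1}])=(-1)^i$. The up-Laplacian is $\mathcal{L}^{up}_n(K,w)=\delta_n^*\delta_n$ on $C^n$; with $w\equiv1$ it is the combinatorial up-Laplacian. Both Laplacians act on $n$-cochains of spaces of the same dimension $|S_n(K)|$. *)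

theory Defs
  imports "Jordan_Normal_Form.Char_Poly"
begin

text \<open>The orientation
 of a face is the one given by listing its vertices in increasing order.\<close>

definition simplicial_complex :: "'v set set \<Rightarrow> bool" where
  "simplicial_complex K \<longleftrightarrow> finite K \<and>
     (\<forall>F\<in>K. finite F \<and> F \<noteq> {}) \<and>
     (\<forall>F\<in>K. \<forall>G. G \<subseteq> F \<longrightarrow> G \<noteq> {} \<longrightarrow> G \<in> K)"

definition subcomplex :: "'v set set \<Rightarrow> 'v set set \<Rightarrow> bool" where
  "subcomplex L K \<longleftrightarrow> simplicial_complex L \<and> L \<subseteq> K"

definition faces :: "nat \<Rightarrow> 'v set set \<Rightarrow> 'v set set" where
  "faces j K = {F \<in> K. card F = j + 1}"

text \<open>Position (0-based) of vertex v in the increasingly ordered face Fb.\<close>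
definition vpos :: "'v::linorder set \<Rightarrow> 'v \<Rightarrow> nat" where
  "vpos Fb v = card {u \<in> Fb. u < v}"

text \<open>Coboundary: \<open>(\<delta> f)[v_0..v_{j+1}] = \<Sum>_i (-1)^i f[v_0..\<hat>v_i..v_{j+1}]\<close>.
 Cochains are real functions on (positively oriented) faces.\<close>
definition coboundary :: "('v::linorder set \<Rightarrow> real) \<Rightarrow> 'v set \<Rightarrow> real" where
  "coboundary f Fb = (\<Sum>v\<in>Fb. (-1) ^ vpos Fb v * f (Fb - {v}))"

text \<open>\<open>sgn([F], \<partial>[Fb])\<close> for F a facet of Fb.\<close>
definition bsign :: "'v::linorder set \<Rightarrow> 'v set \<Rightarrow> real" where
  "bsign F Fb = (-1) ^ vpos Fb (the_elem (Fb - F))"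

text \<open>Formal adjoint \<open>\<delta>_j^*\<close> w.r.t. the weight w on the complex K.\<close>
definition coboundary_adj ::
  "'v::linorder set set \<Rightarrow> ('v set \<Rightarrow> real) \<Rightarrow> nat \<Rightarrow> ('v set \<Rightarrow> real) \<Rightarrow> 'v set \<Rightarrow> real" where
  "coboundary_adj K w j g F =
     (if w F \<noteq> 0 then
        (\<Sum>Fb\<in>{Fb \<in> faces (j + 1) K. F \<subset> Fb}. w Fb / w F * bsign F Fb * g Fb)
      else 0)"

definition up_laplacian ::
  "'v::linorder set set \<Rightarrow> ('v set \<Rightarrow> real) \<Rightarrow> nat \<Rightarrow> ('v set \<Rightarrow> real) \<Rightarrow> 'v set \<Rightarrow> real" where
  "up_laplacian K w n f = coboundary_adj K w n (coboundary f)"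

definition face_enum :: "nat \<Rightarrow> 'v set set \<Rightarrow> 'v set list" where
  "face_enum n K = (SOME xs. distinct xs \<and> set xs = faces n K)"

definition up_laplacian_mat ::
  "'v::linorder set set \<Rightarrow> ('v set \<Rightarrow> real) \<Rightarrow> nat \<Rightarrow> real mat" where
  "up_laplacian_mat K w n =
     (let xs = face_enum n K; N = length xs in
      mat N N (\<lambda>(i, j). up_laplacian K w n (\<lambda>F. if F = xs ! j then 1 else 0) (xs ! i)))"

definition eigenvalues_sorted :: "real mat \<Rightarrow> real list" where
  "eigenvalues_sorted A = sorted_list_of_multiset (proots (char_poly A))"

end

theory Submission
  imports Defs "Jordan_Normal_Form.Schur_Decomposition"
begin

text \<open>In the basis of indicator cochains of the \<open>n\<close>-faces, the up-Laplacian of \<open>(L, w\<^sub>L)\<close> has the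
  matrix \<open>P G\<^sub>L\<close>, where \<open>G\<^sub>L\<close> is the Gram matrix of the coboundaries of the basis cochains
  weighted by \<open>w\<^sub>L\<close> on the \<open>(n+1)\<close>-faces of \<open>L\<close>, and \<open>P\<close> is the 0/1 diagonal matrix of the
  weights of the \<open>n\<close>-faces; for \<open>K\<close> it is the unweighted Gram matrix \<open>G\<^sub>K\<close>. Since \<open>L \<subseteq> K\<close> and
  \<open>w\<^sub>L \<le> 1\<close>, \<open>G\<^sub>L \<le> G\<^sub>K\<close> as quadratic forms. The matrix \<open>P G\<^sub>L\<close> has the same eigenvalues
  as the symmetric matrix \<open>P G\<^sub>L P\<close>, whose quadratic form agrees with that of \<open>G\<^sub>L\<close> on the
  range of \<open>P\<close>. If \<open>\<theta>\<^sub>k > 0\<close>, the eigenvectors of \<open>P G\<^sub>L P\<close> for \<open>\<theta>\<^sub>k, \<theta>\<^sub>k\<^sub>+\<^sub>1, \<dots>\<close> span a subspace of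
  that range on which \<open>P G\<^sub>L P \<le> G\<^sub>K\<close>, and the Courant--Fischer dimension count gives
  \<open>\<theta>\<^sub>k \<le> \<lambda>\<^sub>k\<close>; if \<open>\<theta>\<^sub>k \<le> 0\<close>, the claim follows from \<open>G\<^sub>K\<close> being positive semidefinite.\<close>

section \<open>Spectral theorem for real symmetric matrices\<close>

lemma symmetric_mat_index:
  assumes "A \<in> carrier_mat n n" "transpose_mat A = A" "i < n" "j < n"
  shows "A $$ (i, j) = A $$ (j, i)"
  by (metis assms carrier_matD index_transpose_mat(1))

lemma real_symmetric_eigenvalue_real:
  fixes A :: "real mat" and v :: "complex vec"
  assumes A: "A \<in> carrier_mat n n" and sym: "transpose_mat A = A"
    and v: "v \<in> carrier_vec n" "v \<noteq> 0\<^sub>v n"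
    and eigen: "map_mat complex_of_real A *\<^sub>v v = a \<cdot>\<^sub>v v"
  shows "a \<in> \<real>"
proof -
  have ev: "(\<Sum>j<n. complex_of_real (A $$ (i, j)) * v $ j) = a * v $ i" if i: "i < n" for i
  proof -
    have "(map_mat complex_of_real A *\<^sub>v v) $ i = (\<Sum>j<n. complex_of_real (A $$ (i, j)) * v $ j)"
      using i A v(1) by (auto simp: scalar_prod_def row_def atLeast0LessThan)
    then show ?thesis using eigen i v(1) by simp
  qed
  \<comment> \<open>The Rayleigh quotient \<open>v\<^sup>* A v / v\<^sup>* v\<close> equals \<open>a\<close>; both numerator and denominator are real.\<close>
  define S where "S = (\<Sum>i<n. cnj (v $ i) * (\<Sum>j<n. complex_of_real (A $$ (i, j)) * v $ j))"
  define N where "N = (\<Sum>i<n. complex_of_real ((cmod (v $ i))\<^sup>2))"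
  have "cnj (v $ i) * v $ i = complex_of_real ((cmod (v $ i))\<^sup>2)" for i
    by (subst complex_norm_square) (simp add: mult.commute)
  then have SN: "S = a * N"
    unfolding S_def N_def using ev by (simp add: sum_distrib_left mult_ac)
  have "cnj S = (\<Sum>i<n. \<Sum>j<n. complex_of_real (A $$ (i, j)) * v $ i * cnj (v $ j))"
    unfolding S_def by (simp add: sum_distrib_left mult_ac)
  also have "\<dots> = (\<Sum>j<n. \<Sum>i<n. complex_of_real (A $$ (j, i)) * v $ i * cnj (v $ j))"
    using symmetric_mat_index[OF A sym] by (subst sum.swap) (intro sum.cong refl, auto)
  also have "\<dots> = S"
    unfolding S_def by (simp add: sum_distrib_left mult_ac)
  finally have "cnj S = S" .
  obtain i where i: "i < n" "v $ i \<noteq> 0"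
    using v by (auto simp: vec_eq_iff)
  have "(\<Sum>i<n. (cmod (v $ i))\<^sup>2) > 0"
    by (rule sum_pos2[of _ i]) (use i in auto)
  then have "N \<noteq> 0" "cnj N = N"
    unfolding N_def of_real_sum[symmetric] by (auto simp del: of_real_sum)
  with \<open>cnj S = S\<close> SN have "cnj a = a"
    by (metis complex_cnj_mult mult_cancel_right)
  then show ?thesis
    by (simp add: Reals_cnj_iff)
qed

lemma real_symmetric_char_poly_has_root:
  fixes A :: "real mat"
  assumes A: "A \<in> carrier_mat n n" and sym: "transpose_mat A = A" and n: "0 < n"
  shows "\<exists>r. poly (char_poly A) r = 0"
proof -
  define Ac where "Ac = map_mat complex_of_real A"
  have Ac: "Ac \<in> carrier_mat n n"
    using A unfolding Ac_def by auto
  have cp: "char_poly Ac = map_poly of_real (char_poly A)"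
    unfolding Ac_def by (rule of_real_hom.char_poly_hom[OF A])
  have "degree (char_poly Ac) = n"
    using degree_monic_char_poly[OF Ac] by auto
  then have "\<not> constant (poly (char_poly Ac))"
    using n by (simp add: constant_degree)
  then obtain a where a: "poly (char_poly Ac) a = 0"
    using fundamental_theorem_of_algebra by blast
  then have "eigenvalue Ac a"
    using eigenvalue_root_char_poly[OF Ac] by simp
  then obtain v where "v \<in> carrier_vec n" "v \<noteq> 0\<^sub>v n" "Ac *\<^sub>v v = a \<cdot>\<^sub>v v"
    unfolding eigenvalue_def eigenvector_def using Ac by auto
  then have "a = complex_of_real (Re a)"
    using real_symmetric_eigenvalue_real[OF A sym] unfolding Ac_def by (simp add: Reals_def)
  then have "complex_of_real (poly (char_poly A) (Re a)) = 0"
    using a unfolding cp by (metis of_real_hom.poly_map_poly)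
  then show ?thesis
    by auto
qed

lemma orthonormal_mat_of_cols:
  fixes ws :: "real vec list"
  assumes ws: "set ws \<subseteq> carrier_vec n" "corthogonal ws" "length ws = n"
  defines "W \<equiv> mat_of_cols n (map (\<lambda>w. (1 / sqrt (w \<bullet> w)) \<cdot>\<^sub>v w) ws)"
  shows "W \<in> carrier_mat n n" and "transpose_mat W * W = 1\<^sub>m n"
    and "i < n \<Longrightarrow> col W i = (1 / sqrt (ws ! i \<bullet> ws ! i)) \<cdot>\<^sub>v ws ! i"
proof -
  show W: "W \<in> carrier_mat n n"
    unfolding W_def using ws by auto
  have wsi: "ws ! i \<in> carrier_vec n" if "i < n" for i
    using ws that by auto
  have orth: "(ws ! i \<bullet> ws ! j = 0) = (i \<noteq> j)" if "i < n" "j < n" for i j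
    using corthogonalD[OF ws(2), of i j] that ws(3) by simp
  show colW: "col W i = (1 / sqrt (ws ! i \<bullet> ws ! i)) \<cdot>\<^sub>v ws ! i" if "i < n" for i
    unfolding W_def using that ws wsi[OF that] by (subst col_mat_of_cols) auto
  have pos: "ws ! i \<bullet> ws ! i > 0" if "i < n" for i
  proof -
    have "ws ! i \<bullet> ws ! i \<ge> 0"
      using wsi[OF that] by (simp add: scalar_prod_def sum_nonneg)
    then show ?thesis
      using orth[OF that that] by simp
  qed
  show "transpose_mat W * W = 1\<^sub>m n"
  proof (rule eq_matI)
    fix i j assume "i < dim_row (1\<^sub>m n :: real mat)" "j < dim_col (1\<^sub>m n :: real mat)"
    then have i: "i < n" and j: "j < n"
      by auto
    have "(transpose_mat W * W) $$ (i, j)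
        = (1 / sqrt (ws ! i \<bullet> ws ! i)) * (1 / sqrt (ws ! j \<bullet> ws ! j)) * (ws ! i \<bullet> ws ! j)"
      using i j W wsi[OF i] wsi[OF j]
      by (simp add: colW[OF i] colW[OF j] smult_scalar_prod_distrib scalar_prod_smult_distrib)
    also have "\<dots> = (1\<^sub>m n :: real mat) $$ (i, j)"
    proof (cases "i = j")
      case True
      have "sqrt (ws ! i \<bullet> ws ! i) * sqrt (ws ! i \<bullet> ws ! i) = ws ! i \<bullet> ws ! i"
        using pos[OF i] by simp
      then show ?thesis
        using True i pos[OF i] by (simp add: field_simps)
    qed (use orth[OF i j] i j in simp)
    finally show "(transpose_mat W * W) $$ (i, j) = (1\<^sub>m n :: real mat) $$ (i, j)" .
  qed (use W in auto)
qed

lemma orthogonal_mat_with_first_col: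
  fixes v :: "real vec"
  assumes v: "v \<in> carrier_vec n" and v0: "v \<noteq> 0\<^sub>v n"
  obtains W c where "W \<in> carrier_mat n n" "transpose_mat W * W = 1\<^sub>m n" "col W 0 = c \<cdot>\<^sub>v v"
proof -
  interpret cof_vec_space n "TYPE(real)" .
  define b where "b = basis_completion v"
  define ws where "ws = gram_schmidt n b"
  from basis_completion[OF v v0, folded b_def]
  have dist_b: "distinct b" and indep: "\<not> lin_dep (set b)" and b: "set b \<subseteq> carrier_vec n"
    and hdb: "hd b = v" and len_b: "length b = n" by auto
  have n: "n \<noteq> 0"
    using v v0 by auto
  from hdb len_b n obtain vs where bv: "b = v # vs"
    by (cases b) auto
  from gram_schmidt_result[OF b dist_b indep refl, folded ws_def]
  have ws: "set ws \<subseteq> carrier_vec n" "corthogonal ws" "length ws = n"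
    by (auto simp: len_b)
  have "ws ! 0 = v"
    using gram_schmidt_hd[OF v, of vs, folded bv ws_def] n ws(3)
    by (metis hd_conv_nth list.size(3))
  then have "col (mat_of_cols n (map (\<lambda>w. (1 / sqrt (w \<bullet> w)) \<cdot>\<^sub>v w) ws)) 0
      = (1 / sqrt (v \<bullet> v)) \<cdot>\<^sub>v v"
    using orthonormal_mat_of_cols(3)[OF ws, of 0] n by simp
  with orthonormal_mat_of_cols(1,2)[OF ws] show ?thesis
    by (rule that)
qed

lemma mult_transpose_eq_one:
  fixes Q :: "'a::field mat"
  assumes Q: "Q \<in> carrier_mat n n" and QQ: "transpose_mat Q * Q = 1\<^sub>m n"
  shows "Q * transpose_mat Q = 1\<^sub>m n"
  by (rule mat_mult_left_right_inverse[OF _ Q QQ]) (use Q in auto)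

lemma char_poly_orthogonal_conj:
  fixes Q :: "'a::field mat"
  assumes Q: "Q \<in> carrier_mat n n" and QQ: "transpose_mat Q * Q = 1\<^sub>m n"
    and A: "A \<in> carrier_mat n n"
  shows "char_poly (Q * A * transpose_mat Q) = char_poly A"
proof (rule char_poly_similar)
  show "similar_mat (Q * A * transpose_mat Q) A"
    unfolding similar_mat_def similar_mat_wit_def Let_def
    by (intro exI[of _ Q] exI[of _ "transpose_mat Q"])
       (use Q A QQ mult_transpose_eq_one[OF Q QQ] in auto)
qed

lemma orthogonal_conj_transpose_cancel:
  fixes W :: "'a::field mat"
  assumes W: "W \<in> carrier_mat n n" and WW: "transpose_mat W * W = 1\<^sub>m n"
    and A: "A \<in> carrier_mat n n"
  shows "W * (transpose_mat W * A * W) * transpose_mat W = A"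
proof -
  have "W * (transpose_mat W * A * W) * transpose_mat W
      = (W * transpose_mat W) * A * (W * transpose_mat W)"
    using W A by (simp add: assoc_mult_mat[of _ n n _ n _ n])
  then show ?thesis
    using mult_transpose_eq_one[OF W WW] A by simp
qed

lemma transpose_mult_conj:
  fixes W B D :: "'a::comm_ring_1 mat"
  assumes W: "W \<in> carrier_mat n n" and B: "B \<in> carrier_mat n n" and D: "D \<in> carrier_mat n n"
  shows "transpose_mat (W * B) * D * (W * B) = transpose_mat B * (transpose_mat W * D * W) * B"
    and "(W * B) * D * transpose_mat (W * B) = W * (B * D * transpose_mat B) * transpose_mat W"
  using W B D by (simp_all add: transpose_mult[OF W B] assoc_mult_mat[of _ n n _ n _ n])

lemma char_poly_mat_diag:
  "char_poly (mat_diag n (d :: nat \<Rightarrow> 'a::field)) = (\<Prod>a \<leftarrow> map d [0..<n]. [:- a, 1:])"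
proof -
  have "upper_triangular (mat_diag n d)"
    unfolding mat_diag_def by (auto simp: upper_triangular_def)
  moreover have "diag_mat (mat_diag n d) = map d [0..<n]"
    unfolding diag_mat_def mat_diag_def by (auto intro: nth_equalityI)
  ultimately show ?thesis
    using char_poly_upper_triangular[of "mat_diag n d" n] by simp
qed

lemma proots_prod_linear_factors:
  "proots (\<Prod>a \<leftarrow> xs. [:- a, 1:]) = mset (xs :: 'a::idom list)"
proof (induction xs)
  case (Cons a xs)
  have "(\<Prod>b \<leftarrow> xs. [:- b, 1:]) \<noteq> 0"
    by (auto simp: prod_list_zero_iff)
  then have "proots ([:- a, 1:] * (\<Prod>b \<leftarrow> xs. [:- b, 1:]))
      = proots [:- a, 1:] + proots (\<Prod>b \<leftarrow> xs. [:- b, 1:])"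
    by (intro proots_mult) auto
  then show ?case
    unfolding list.map prod_list.Cons Cons.IH by simp
qed simp

lemma mat_diag_mult_vec:
  assumes "x \<in> carrier_vec n"
  shows "mat_diag n d *\<^sub>v x = vec n (\<lambda>i. d i * x $ i)"
proof (rule eq_vecI)
  fix i assume "i < dim_vec (vec n (\<lambda>i. d i * x $ i))"
  then have i: "i < n"
    by simp
  have "(mat_diag n d *\<^sub>v x) $ i = (\<Sum>j = 0..<n. (if i = j then d j else 0) * x $ j)"
    using i assms unfolding mat_diag_def by (simp add: scalar_prod_def)
  also have "\<dots> = (\<Sum>j = 0..<n. if j = i then d i * x $ i else 0)"
    by (rule sum.cong) auto
  finally show "(mat_diag n d *\<^sub>v x) $ i = vec n (\<lambda>i. d i * x $ i) $ i"
    using i by simp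
qed (simp add: mat_diag_def)

lemma transpose_mat_diag [simp]: "transpose_mat (mat_diag n d) = mat_diag n d"
  by (rule eq_matI) (auto simp: mat_diag_def)

definition sorted_spectral_decomposition :: "nat \<Rightarrow> real mat \<Rightarrow> real mat \<Rightarrow> (nat \<Rightarrow> real) \<Rightarrow> bool"
  where "sorted_spectral_decomposition n A Q d \<longleftrightarrow>
     Q \<in> carrier_mat n n \<and> transpose_mat Q * Q = 1\<^sub>m n \<and>
     A = Q * mat_diag n d * transpose_mat Q \<and> (\<forall>i j. i \<le> j \<longrightarrow> j < n \<longrightarrow> d i \<le> d j)"

lemma char_poly_orthogonal_diag:
  fixes Q :: "real mat"
  assumes "Q \<in> carrier_mat n n" "transpose_mat Q * Q = 1\<^sub>m n"
  shows "char_poly (Q * mat_diag n d * transpose_mat Q) = (\<Prod>a \<leftarrow> map d [0..<n]. [:- a, 1:])"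
  using char_poly_orthogonal_conj[OF assms mat_diag_dim] char_poly_mat_diag by simp

lemma eigenvalues_sorted_spectral_decomposition:
  assumes "sorted_spectral_decomposition n A Q d"
  shows "eigenvalues_sorted A = map d [0..<n]"
proof -
  from assms have Q: "Q \<in> carrier_mat n n" and QQ: "transpose_mat Q * Q = 1\<^sub>m n"
    and A: "A = Q * mat_diag n d * transpose_mat Q" and "\<forall>i j. i \<le> j \<longrightarrow> j < n \<longrightarrow> d i \<le> d j"
    unfolding sorted_spectral_decomposition_def by auto
  then have "sorted (map d [0..<n])"
    by (auto simp: sorted_iff_nth_mono)
  moreover have "proots (char_poly A) = mset (map d [0..<n])"
    unfolding A char_poly_orthogonal_diag[OF Q QQ] by (rule proots_prod_linear_factors)
  ultimately show ?thesis
    unfolding eigenvalues_sorted_def by (simp only: sorted_list_of_multiset_mset sorted_sort_id)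
qed

lemma transpose_conj_symmetric:
  fixes W A :: "'a::comm_ring_1 mat"
  assumes W: "W \<in> carrier_mat n n" and A: "A \<in> carrier_mat n n" and sym: "transpose_mat A = A"
  shows "transpose_mat (transpose_mat W * A * W) = transpose_mat W * A * W"
proof -
  have "transpose_mat (transpose_mat W * A * W) = transpose_mat W * transpose_mat (transpose_mat W * A)"
    by (rule transpose_mult) (use W A in auto)
  also have "transpose_mat (transpose_mat W * A) = A * W"
    using W A sym by (subst transpose_mult[of _ n n]) auto
  finally show ?thesis
    using W A by (simp add: assoc_mult_mat[of _ n n _ n _ n])
qed

lemma orthogonal_conj_index_eigen_col:
  fixes A W :: "real mat"
  assumes A: "A \<in> carrier_mat n n" and W: "W \<in> carrier_mat n n" and WW: "transpose_mat W * W = 1\<^sub>m n"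
    and eigen: "A *\<^sub>v col W j = e \<cdot>\<^sub>v col W j" and i: "i < n" and j: "j < n"
  shows "(transpose_mat W * A * W) $$ (i, j) = (if i = j then e else 0)"
proof -
  have row_i: "row (transpose_mat W) i = col W i"
    using i W by simp
  have col_j: "col (A * W) j = e \<cdot>\<^sub>v col W j"
    unfolding eigen[symmetric] by (rule col_mult2[OF A W j])
  have "(transpose_mat W * A * W) $$ (i, j) = row (transpose_mat W) i \<bullet> col (A * W) j"
    using i j A W by (subst assoc_mult_mat[of _ n n _ n _ n]) auto
  also have "\<dots> = e * (col W i \<bullet> col W j)"
    unfolding row_i col_j by (rule scalar_prod_smult_distrib[OF col_dim col_dim])
  also have "col W i \<bullet> col W j = (transpose_mat W * W) $$ (i, j)"
    using i j W by simp
  finally show ?thesis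
    using i j WW by simp
qed

lemma orthogonal_deflation:
  fixes A W :: "real mat"
  assumes A: "A \<in> carrier_mat (Suc m) (Suc m)" and sym: "transpose_mat A = A"
    and W: "W \<in> carrier_mat (Suc m) (Suc m)" and WW: "transpose_mat W * W = 1\<^sub>m (Suc m)"
    and eigen: "A *\<^sub>v col W 0 = e \<cdot>\<^sub>v col W 0"
  obtains A3 where "A3 \<in> carrier_mat m m" "transpose_mat A3 = A3"
    "transpose_mat W * A * W = four_block_mat (mat 1 1 (\<lambda>_. e)) (0\<^sub>m 1 m) (0\<^sub>m m 1) A3"
proof -
  define n where "n = Suc m"
  define A' where "A' = transpose_mat W * A * W"
  have A': "A' \<in> carrier_mat n n"
    using A W unfolding A'_def n_def by auto
  have A'_sym: "A' $$ (i, j) = A' $$ (j, i)" if "i < n" "j < n" for i j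
    using symmetric_mat_index[OF A' _ that] transpose_conj_symmetric[OF W A sym]
    unfolding A'_def n_def by simp
  have A'_col0: "A' $$ (i, 0) = (if i = 0 then e else 0)" if "i < n" for i
    using orthogonal_conj_index_eigen_col[OF A W WW eigen] that unfolding A'_def n_def by simp
  define A3 where "A3 = mat m m (\<lambda>(i, j). A' $$ (Suc i, Suc j))"
  have A3: "A3 \<in> carrier_mat m m"
    unfolding A3_def by auto
  moreover have "transpose_mat A3 = A3"
    by (rule eq_matI) (auto simp: A3_def n_def A'_sym)
  moreover have "A' = four_block_mat (mat 1 1 (\<lambda>_. e)) (0\<^sub>m 1 m) (0\<^sub>m m 1) A3"
  proof (rule eq_matI)
    fix i j assume "i < dim_row (four_block_mat (mat 1 1 (\<lambda>_. e)) (0\<^sub>m 1 m) (0\<^sub>m m 1) A3)"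
      "j < dim_col (four_block_mat (mat 1 1 (\<lambda>_. e)) (0\<^sub>m 1 m) (0\<^sub>m m 1) A3)"
    then have i: "i < n" and j: "j < n"
      using A3 by (auto simp: n_def)
    show "A' $$ (i, j) = four_block_mat (mat 1 1 (\<lambda>_. e)) (0\<^sub>m 1 m) (0\<^sub>m m 1) A3 $$ (i, j)"
    proof (cases "i = 0")
      case True
      then show ?thesis
        using A'_sym[OF i j] A'_col0[OF j] j A3 by (auto simp: n_def four_block_mat_def)
    next
      case False
      then show ?thesis
        using A'_col0[OF i] i j A3 by (cases j) (auto simp: n_def A3_def four_block_mat_def)
    qed
  qed (use A' A3 in \<open>auto simp: n_def\<close>)
  ultimately show ?thesis
    using that unfolding A'_def by blast
qed

lemma orthogonal_block_extension:
  fixes Q :: "real mat"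
  assumes Q: "Q \<in> carrier_mat m m" and QQ: "transpose_mat Q * Q = 1\<^sub>m m"
  defines "B \<equiv> four_block_mat (1\<^sub>m 1) (0\<^sub>m 1 m) (0\<^sub>m m 1) Q"
  shows "B \<in> carrier_mat (Suc m) (Suc m)" and "transpose_mat B * B = 1\<^sub>m (Suc m)"
    and "B * mat_diag (Suc m) (case_nat e d) * transpose_mat B
       = four_block_mat (mat 1 1 (\<lambda>_. e)) (0\<^sub>m 1 m) (0\<^sub>m m 1) (Q * mat_diag m d * transpose_mat Q)"
proof -
  define E where "E = (mat 1 1 (\<lambda>_. e) :: real mat)"
  have E: "E \<in> carrier_mat 1 1"
    unfolding E_def by auto
  show "B \<in> carrier_mat (Suc m) (Suc m)"
    unfolding B_def using Q by auto
  have BT: "transpose_mat B = four_block_mat (1\<^sub>m 1) (0\<^sub>m 1 m) (0\<^sub>m m 1) (transpose_mat Q)"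
    unfolding B_def by (subst transpose_four_block_mat) (use Q in auto)
  have one: "four_block_mat (1\<^sub>m 1) (0\<^sub>m 1 m) (0\<^sub>m m 1) (1\<^sub>m m) = (1\<^sub>m (Suc m) :: real mat)"
    by (rule eq_matI) auto
  show "transpose_mat B * B = 1\<^sub>m (Suc m)"
    unfolding BT unfolding B_def
    by (subst mult_four_block_mat[of _ 1 1 _ m _ m _ _ 1 _ m]) (use Q QQ one in auto)
  have D: "mat_diag (Suc m) (case_nat e d) = four_block_mat E (0\<^sub>m 1 m) (0\<^sub>m m 1) (mat_diag m d)"
    by (rule eq_matI) (auto simp: mat_diag_def E_def split: nat.split)
  have QD: "Q * mat_diag m d \<in> carrier_mat m m"
    using Q by simp
  have "B * four_block_mat E (0\<^sub>m 1 m) (0\<^sub>m m 1) (mat_diag m d)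
      = four_block_mat E (0\<^sub>m 1 m) (0\<^sub>m m 1) (Q * mat_diag m d)"
    unfolding B_def
    by (subst mult_four_block_mat[of _ 1 1 _ m _ m _ _ 1 _ m])
       (use Q E in \<open>auto simp: left_mult_zero_mat[OF mat_diag_dim]\<close>)
  moreover have "four_block_mat E (0\<^sub>m 1 m) (0\<^sub>m m 1) (Q * mat_diag m d)
      * four_block_mat (1\<^sub>m 1) (0\<^sub>m 1 m) (0\<^sub>m m 1) (transpose_mat Q)
      = four_block_mat E (0\<^sub>m 1 m) (0\<^sub>m m 1) (Q * mat_diag m d * transpose_mat Q)"
    by (subst mult_four_block_mat[of _ 1 1 _ m _ m _ _ 1 _ m])
       (use Q E in \<open>auto simp: right_mult_zero_mat[OF QD]
         left_add_zero_mat[OF mult_carrier_mat[OF QD transpose_carrier_mat[THEN iffD2, OF Q]]]\<close>)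
  ultimately show "B * mat_diag (Suc m) (case_nat e d) * transpose_mat B
      = four_block_mat (mat 1 1 (\<lambda>_. e)) (0\<^sub>m 1 m) (0\<^sub>m m 1) (Q * mat_diag m d * transpose_mat Q)"
    unfolding D BT E_def by simp
qed

lemma char_poly_orthogonal_deflation:
  fixes A W :: "real mat"
  assumes A: "A \<in> carrier_mat (Suc m) (Suc m)"
    and W: "W \<in> carrier_mat (Suc m) (Suc m)" and WW: "transpose_mat W * W = 1\<^sub>m (Suc m)"
    and A3: "A3 \<in> carrier_mat m m"
    and deflate: "transpose_mat W * A * W = four_block_mat (mat 1 1 (\<lambda>_. e)) (0\<^sub>m 1 m) (0\<^sub>m m 1) A3"
  shows "char_poly A = char_poly (mat 1 1 (\<lambda>_. e)) * char_poly A3"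
proof -
  have "char_poly A = char_poly (transpose_mat W * A * W)"
    using char_poly_orthogonal_conj[of "transpose_mat W" "Suc m" A] W A mult_transpose_eq_one[OF W WW]
    by simp
  also have "\<dots> = char_poly (mat 1 1 (\<lambda>_. e)) * char_poly A3"
    unfolding deflate by (rule char_poly_four_block_zeros_col) (use A3 in auto)
  finally show ?thesis .
qed

lemma real_symmetric_least_eigenvalue:
  fixes A :: "real mat"
  assumes A: "A \<in> carrier_mat n n" and sym: "transpose_mat A = A" and n: "0 < n"
  obtains e v where "v \<in> carrier_vec n" "v \<noteq> 0\<^sub>v n" "A *\<^sub>v v = e \<cdot>\<^sub>v v"
    "\<And>r. poly (char_poly A) r = 0 \<Longrightarrow> e \<le> r"
proof -
  define R where "R = {r. poly (char_poly A) r = 0}"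
  have "finite R"
    using degree_monic_char_poly[OF A] unfolding R_def by (intro poly_roots_finite) auto
  moreover have "R \<noteq> {}"
    using real_symmetric_char_poly_has_root[OF A sym n] unfolding R_def by auto
  ultimately have "Min R \<in> R" and least: "\<And>r. r \<in> R \<Longrightarrow> Min R \<le> r"
    by auto
  then have "eigenvalue A (Min R)"
    using eigenvalue_root_char_poly[OF A] unfolding R_def by auto
  then obtain v where "v \<in> carrier_vec n" "v \<noteq> 0\<^sub>v n" "A *\<^sub>v v = Min R \<cdot>\<^sub>v v"
    using A unfolding eigenvalue_def eigenvector_def by auto
  with least show ?thesis
    using that unfolding R_def by blast
qed

theorem real_symmetric_spectral_decomposition:
  fixes A :: "real mat"
  assumes "A \<in> carrier_mat n n" and "transpose_mat A = A"
  shows "\<exists>Q d. sorted_spectral_decomposition n A Q d"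
  using assms
proof (induction n arbitrary: A)
  case 0
  then have "sorted_spectral_decomposition 0 A (1\<^sub>m 0) (\<lambda>_. 0)"
    unfolding sorted_spectral_decomposition_def by (auto intro!: eq_matI)
  then show ?case
    by blast
next
  case (Suc m A)
  note A = Suc.prems(1) and sym = Suc.prems(2)
  \<comment> \<open>Split off an eigenvector of the least eigenvalue, so that the eigenvalues of the
    remaining block lie above it.\<close>
  obtain e v where v: "v \<in> carrier_vec (Suc m)" "v \<noteq> 0\<^sub>v (Suc m)" "A *\<^sub>v v = e \<cdot>\<^sub>v v"
    and e_least: "\<And>r. poly (char_poly A) r = 0 \<Longrightarrow> e \<le> r"
    using real_symmetric_least_eigenvalue[OF A sym] by blast
  obtain W c where W: "W \<in> carrier_mat (Suc m) (Suc m)" and WW: "transpose_mat W * W = 1\<^sub>m (Suc m)"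
    and c: "col W 0 = c \<cdot>\<^sub>v v"
    by (rule orthogonal_mat_with_first_col[OF v(1,2)])
  have "A *\<^sub>v col W 0 = e \<cdot>\<^sub>v col W 0"
    unfolding c using mult_mat_vec[OF A v(1)] v(3) by (simp add: smult_smult_assoc mult.commute)
  then obtain A3 where A3: "A3 \<in> carrier_mat m m" "transpose_mat A3 = A3"
    and deflate: "transpose_mat W * A * W = four_block_mat (mat 1 1 (\<lambda>_. e)) (0\<^sub>m 1 m) (0\<^sub>m m 1) A3"
    using orthogonal_deflation[OF A sym W WW] by blast
  obtain Q3 d3 where Q3: "Q3 \<in> carrier_mat m m" and QQ3: "transpose_mat Q3 * Q3 = 1\<^sub>m m"
    and A3_eq: "A3 = Q3 * mat_diag m d3 * transpose_mat Q3"
    and d3_sorted: "\<forall>i j. i \<le> j \<longrightarrow> j < m \<longrightarrow> d3 i \<le> d3 j"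
    using Suc.IH[OF A3] unfolding sorted_spectral_decomposition_def by blast
  define B where "B = four_block_mat (1\<^sub>m 1) (0\<^sub>m 1 m) (0\<^sub>m m 1) Q3"
  note B = orthogonal_block_extension[OF Q3 QQ3, folded B_def]
  define d where "d = case_nat e d3"
  have "(W * B) * mat_diag (Suc m) d * transpose_mat (W * B)
      = W * (transpose_mat W * A * W) * transpose_mat W"
    unfolding transpose_mult_conj(2)[OF W B(1) mat_diag_dim] d_def B(3)[of e d3] deflate A3_eq ..
  also have "\<dots> = A"
    by (rule orthogonal_conj_transpose_cancel[OF W WW A])
  moreover have "transpose_mat (W * B) * (W * B) = 1\<^sub>m (Suc m)"
    using transpose_mult_conj(1)[OF W B(1) one_carrier_mat] W WW B by simp
  moreover have "e \<le> d3 i" if "i < m" for i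
  proof -
    have "char_poly A = char_poly (mat 1 1 (\<lambda>_. e)) * (\<Prod>a \<leftarrow> map d3 [0..<m]. [:- a, 1:])"
      using char_poly_orthogonal_deflation[OF A W WW A3(1) deflate]
      unfolding A3_eq char_poly_orthogonal_diag[OF Q3 QQ3] .
    then have "poly (char_poly A) (d3 i) = 0"
      using that by (auto simp: poly_prod_list prod_list_zero_iff)
    then show ?thesis
      by (rule e_least)
  qed
  then have "\<forall>i j. i \<le> j \<longrightarrow> j < Suc m \<longrightarrow> d i \<le> d j"
    using d3_sorted by (auto simp: d_def split: nat.split)
  ultimately have "sorted_spectral_decomposition (Suc m) A (W * B) d"
    unfolding sorted_spectral_decomposition_def using W B(1) by auto
  then show ?case
    by blast
qed

section \<open>Comparing sorted eigenvalues through quadratic forms\<close>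

lemma quadratic_form_conj_mat_diag:
  fixes Q :: "real mat"
  assumes Q: "Q \<in> carrier_mat n n" and x: "x \<in> carrier_vec n"
  shows "x \<bullet> ((Q * mat_diag n d * transpose_mat Q) *\<^sub>v x)
       = (\<Sum>j<n. d j * ((transpose_mat Q *\<^sub>v x) $ j)\<^sup>2)"
proof -
  define \<beta> where "\<beta> = transpose_mat Q *\<^sub>v x"
  have \<beta>: "\<beta> \<in> carrier_vec n"
    using Q x unfolding \<beta>_def by simp
  have D\<beta>: "mat_diag n d *\<^sub>v \<beta> \<in> carrier_vec n"
    by (rule mult_mat_vec_carrier[OF mat_diag_dim \<beta>])
  have "x \<bullet> ((Q * mat_diag n d * transpose_mat Q) *\<^sub>v x) = x \<bullet> (Q *\<^sub>v (mat_diag n d *\<^sub>v \<beta>))"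
    using Q x unfolding \<beta>_def by (simp add: assoc_mult_mat_vec[of _ n n _ n])
  also have "\<dots> = \<beta> \<bullet> (mat_diag n d *\<^sub>v \<beta>)"
    using transpose_vec_mult_scalar[OF Q D\<beta> x] unfolding \<beta>_def by simp
  also have "\<dots> = (\<Sum>j<n. d j * (\<beta> $ j)\<^sup>2)"
    using \<beta> by (simp add: mat_diag_mult_vec scalar_prod_def power2_eq_square atLeast0LessThan mult_ac)
  finally show ?thesis
    unfolding \<beta>_def .
qed

lemma scalar_prod_self_orthogonal:
  fixes Q :: "real mat"
  assumes Q: "Q \<in> carrier_mat n n" and QQ: "transpose_mat Q * Q = 1\<^sub>m n" and x: "x \<in> carrier_vec n"
  shows "x \<bullet> x = (\<Sum>j<n. ((transpose_mat Q *\<^sub>v x) $ j)\<^sup>2)"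
  using quadratic_form_conj_mat_diag[OF Q x, of "\<lambda>_. 1"] mult_transpose_eq_one[OF Q QQ] Q x by simp

lemma orthogonal_mult_vec_cancel:
  fixes Q :: "'a::field mat"
  assumes Q: "Q \<in> carrier_mat n n" and QQ: "transpose_mat Q * Q = 1\<^sub>m n" and v: "v \<in> carrier_vec n"
  shows "transpose_mat Q *\<^sub>v (Q *\<^sub>v v) = v" and "Q *\<^sub>v (transpose_mat Q *\<^sub>v v) = v"
proof -
  have "transpose_mat Q *\<^sub>v (Q *\<^sub>v v) = (transpose_mat Q * Q) *\<^sub>v v"
    by (rule assoc_mult_mat_vec[symmetric]) (use Q v in auto)
  then show "transpose_mat Q *\<^sub>v (Q *\<^sub>v v) = v"
    using QQ v by simp
  have "Q *\<^sub>v (transpose_mat Q *\<^sub>v v) = (Q * transpose_mat Q) *\<^sub>v v"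
    by (rule assoc_mult_mat_vec[symmetric]) (use Q v in auto)
  then show "Q *\<^sub>v (transpose_mat Q *\<^sub>v v) = v"
    using mult_transpose_eq_one[OF Q QQ] v by simp
qed

lemma wide_mat_kernel_nonzero:
  fixes A :: "'a::idom mat"
  assumes A: "A \<in> carrier_mat m k" and mk: "m < k"
  obtains v where "v \<in> carrier_vec k" "v \<noteq> 0\<^sub>v k" "A *\<^sub>v v = 0\<^sub>v m"
proof -
  \<comment> \<open>Pad \<open>A\<close> with zero rows to a singular square matrix.\<close>
  define B where "B = mat k k (\<lambda>(i, j). if i < m then A $$ (i, j) else 0)"
  have B: "B \<in> carrier_mat k k"
    unfolding B_def by auto
  have "B = mat\<^sub>r k k (\<lambda>i. if i = k - 1 then 0\<^sub>v k else row B i)"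
    by (rule eq_matI) (use mk in \<open>auto simp: B_def\<close>)
  also have "det \<dots> = 0"
    by (rule det_row_0) (use mk B in auto)
  finally obtain v where v: "v \<in> carrier_vec k" "v \<noteq> 0\<^sub>v k" "B *\<^sub>v v = 0\<^sub>v k"
    using det_0_iff_vec_prod_zero[OF B] by auto
  have "A *\<^sub>v v = 0\<^sub>v m"
  proof (rule eq_vecI)
    fix i assume i: "i < dim_vec (0\<^sub>v m :: 'a vec)"
    have "(A *\<^sub>v v) $ i = (B *\<^sub>v v) $ i"
      using i mk A v(1) by (auto simp: B_def scalar_prod_def row_def)
    then show "(A *\<^sub>v v) $ i = 0\<^sub>v m $ i"
      using v(3) i mk by simp
  qed (use A in simp)
  with v that show ?thesis
    by blast
qed

text \<open>The dimension count behind the Courant--Fischer principle: the span of the first \<open>k + 1\<close>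
  columns of \<open>R\<close> meets the span of the last \<open>N - k\<close> columns of \<open>Q\<close> nontrivially.\<close>

lemma column_spans_intersect:
  fixes Q R :: "'a::idom mat"
  assumes Q: "Q \<in> carrier_mat N N" and R: "R \<in> carrier_mat N N" and k: "k < N"
  obtains \<alpha> \<beta> where "\<alpha> \<in> carrier_vec N" "\<beta> \<in> carrier_vec N" "\<alpha> \<noteq> 0\<^sub>v N \<or> \<beta> \<noteq> 0\<^sub>v N"
    "\<forall>i<N. k < i \<longrightarrow> \<alpha> $ i = 0" "\<forall>j<k. \<beta> $ j = 0" "R *\<^sub>v \<alpha> = Q *\<^sub>v \<beta>"
proof -
  define M where "M = mat N (Suc N) (\<lambda>(i, c). if c \<le> k then R $$ (i, c) else Q $$ (i, c - 1))"
  obtain y where y: "y \<in> carrier_vec (Suc N)" "y \<noteq> 0\<^sub>v (Suc N)" "M *\<^sub>v y = 0\<^sub>v N"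
    using wide_mat_kernel_nonzero[of M N "Suc N"] unfolding M_def by auto
  define \<alpha> where "\<alpha> = vec N (\<lambda>i. if i \<le> k then y $ i else 0)"
  define \<beta> where "\<beta> = vec N (\<lambda>j. if k \<le> j then - y $ Suc j else 0)"
  have "R *\<^sub>v \<alpha> = Q *\<^sub>v \<beta>"
  proof (rule eq_vecI)
    fix i assume "i < dim_vec (Q *\<^sub>v \<beta>)"
    then have i: "i < N"
      using Q by simp
    have "0 = (M *\<^sub>v y) $ i"
      using y(3) i by simp
    also have "\<dots> = (\<Sum>c<Suc N. M $$ (i, c) * y $ c)"
      using i y(1) by (simp add: M_def scalar_prod_def atLeast0LessThan)
    also have "\<dots> = (\<Sum>c<Suc N. if c \<le> k then R $$ (i, c) * y $ c else 0)
        + (\<Sum>c<Suc N. if c \<le> k then 0 else Q $$ (i, c - 1) * y $ c)"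
      unfolding sum.distrib[symmetric] using i by (intro sum.cong) (auto simp: M_def)
    also have "(\<Sum>c<Suc N. if c \<le> k then R $$ (i, c) * y $ c else 0) = (R *\<^sub>v \<alpha>) $ i"
      using i R k by (auto simp: lessThan_Suc scalar_prod_def \<alpha>_def atLeast0LessThan intro!: sum.cong)
    also have "(\<Sum>c<Suc N. if c \<le> k then 0 else Q $$ (i, c - 1) * y $ c) = - (Q *\<^sub>v \<beta>) $ i"
      unfolding sum.lessThan_Suc_shift using i Q
      by (auto simp: scalar_prod_def \<beta>_def atLeast0LessThan sum_negf[symmetric] intro!: sum.cong)
    finally show "(R *\<^sub>v \<alpha>) $ i = (Q *\<^sub>v \<beta>) $ i"
      by simp
  qed (use Q R in simp)
  moreover have "\<alpha> \<noteq> 0\<^sub>v N \<or> \<beta> \<noteq> 0\<^sub>v N"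
  proof (rule ccontr)
    assume "\<not> (\<alpha> \<noteq> 0\<^sub>v N \<or> \<beta> \<noteq> 0\<^sub>v N)"
    then have \<alpha>0: "\<alpha> = 0\<^sub>v N" and \<beta>0: "\<beta> = 0\<^sub>v N"
      by auto
    have "y $ c = 0" if c: "c < Suc N" for c
    proof (cases "c \<le> k")
      case True
      then have "c < N"
        using k by simp
      then have "y $ c = \<alpha> $ c"
        using True by (simp add: \<alpha>_def)
      then show ?thesis
        using \<alpha>0 \<open>c < N\<close> by simp
    next
      case False
      then obtain j where j: "c = Suc j" "k \<le> j" "j < N"
        using c by (cases c) auto
      then have "y $ c = - \<beta> $ j"
        by (simp add: \<beta>_def)
      then show ?thesis
        using \<beta>0 j by simp
    qed
    then have "y = 0\<^sub>v (Suc N)"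
      using y(1) by (intro eq_vecI) auto
    with y(2) show False ..
  qed
  moreover have "\<alpha> \<in> carrier_vec N" "\<beta> \<in> carrier_vec N"
    "\<forall>i<N. k < i \<longrightarrow> \<alpha> $ i = 0" "\<forall>j<k. \<beta> $ j = 0"
    unfolding \<alpha>_def \<beta>_def using k by auto
  ultimately show ?thesis
    using that by blast
qed

lemma orthogonal_mats_common_vector:
  fixes Q R :: "real mat"
  assumes Q: "Q \<in> carrier_mat N N" and QQ: "transpose_mat Q * Q = 1\<^sub>m N"
    and R: "R \<in> carrier_mat N N" and RR: "transpose_mat R * R = 1\<^sub>m N" and k: "k < N"
  obtains x where "x \<in> carrier_vec N" "x \<noteq> 0\<^sub>v N" "\<forall>j<k. (transpose_mat Q *\<^sub>v x) $ j = 0"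
    "\<forall>j<N. k < j \<longrightarrow> (transpose_mat R *\<^sub>v x) $ j = 0"
proof -
  obtain \<alpha> \<beta> where \<alpha>: "\<alpha> \<in> carrier_vec N" and \<beta>: "\<beta> \<in> carrier_vec N"
    and nonzero: "\<alpha> \<noteq> 0\<^sub>v N \<or> \<beta> \<noteq> 0\<^sub>v N"
    and high: "\<forall>i<N. k < i \<longrightarrow> \<alpha> $ i = 0" and low: "\<forall>j<k. \<beta> $ j = 0"
    and R\<alpha>_Q\<beta>: "R *\<^sub>v \<alpha> = Q *\<^sub>v \<beta>"
    using column_spans_intersect[OF Q R k] by blast
  define x where "x = R *\<^sub>v \<alpha>"
  have R\<^sub>x: "transpose_mat R *\<^sub>v x = \<alpha>"
    unfolding x_def by (rule orthogonal_mult_vec_cancel(1)[OF R RR \<alpha>])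
  have Q\<^sub>x: "transpose_mat Q *\<^sub>v x = \<beta>"
    unfolding x_def R\<alpha>_Q\<beta> by (rule orthogonal_mult_vec_cancel(1)[OF Q QQ \<beta>])
  have "x \<noteq> 0\<^sub>v N"
    using nonzero R\<^sub>x Q\<^sub>x R Q by auto
  moreover have "x \<in> carrier_vec N"
    using R \<alpha> unfolding x_def by simp
  ultimately show ?thesis
    using that R\<^sub>x Q\<^sub>x high low by simp
qed

lemma sorted_spectral_decomposition_eigenvalue_le:
  assumes A: "sorted_spectral_decomposition N A Q a"
    and B: "sorted_spectral_decomposition N B R b" and k: "k < N"
    and le: "\<And>x. x \<in> carrier_vec N \<Longrightarrow> \<forall>j<k. (transpose_mat Q *\<^sub>v x) $ j = 0 \<Longrightarrow>
                x \<bullet> (A *\<^sub>v x) \<le> x \<bullet> (B *\<^sub>v x)"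
  shows "a k \<le> b k"
proof -
  from A B have Q: "Q \<in> carrier_mat N N" "transpose_mat Q * Q = 1\<^sub>m N"
    and R: "R \<in> carrier_mat N N" "transpose_mat R * R = 1\<^sub>m N"
    and A_eq: "A = Q * mat_diag N a * transpose_mat Q" and B_eq: "B = R * mat_diag N b * transpose_mat R"
    and a: "\<And>j. k \<le> j \<Longrightarrow> j < N \<Longrightarrow> a k \<le> a j" and b: "\<And>j. j \<le> k \<Longrightarrow> b j \<le> b k"
    using k unfolding sorted_spectral_decomposition_def by auto
  obtain x where x: "x \<in> carrier_vec N" "x \<noteq> 0\<^sub>v N"
    and \<beta>0: "\<forall>j<k. (transpose_mat Q *\<^sub>v x) $ j = 0"
    and \<alpha>0: "\<forall>j<N. k < j \<longrightarrow> (transpose_mat R *\<^sub>v x) $ j = 0"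
    using orthogonal_mats_common_vector[OF Q R k] by blast
  define \<beta> where "\<beta> = transpose_mat Q *\<^sub>v x"
  define \<alpha> where "\<alpha> = transpose_mat R *\<^sub>v x"
  have "a k * (x \<bullet> x) = (\<Sum>j<N. a k * (\<beta> $ j)\<^sup>2)"
    unfolding scalar_prod_self_orthogonal[OF Q x(1)] \<beta>_def by (simp add: sum_distrib_left)
  also have "\<dots> \<le> (\<Sum>j<N. a j * (\<beta> $ j)\<^sup>2)"
  proof (rule sum_mono)
    fix j assume "j \<in> {..<N}"
    then show "a k * (\<beta> $ j)\<^sup>2 \<le> a j * (\<beta> $ j)\<^sup>2"
      using a[of j] \<beta>0 unfolding \<beta>_def by (cases "k \<le> j") (auto intro: mult_right_mono)
  qed
  also have "\<dots> = x \<bullet> (A *\<^sub>v x)"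
    unfolding A_eq quadratic_form_conj_mat_diag[OF Q(1) x(1)] \<beta>_def ..
  also have "\<dots> \<le> x \<bullet> (B *\<^sub>v x)"
    using le[OF x(1) \<beta>0] .
  also have "\<dots> = (\<Sum>j<N. b j * (\<alpha> $ j)\<^sup>2)"
    unfolding B_eq quadratic_form_conj_mat_diag[OF R(1) x(1)] \<alpha>_def ..
  also have "\<dots> \<le> (\<Sum>j<N. b k * (\<alpha> $ j)\<^sup>2)"
  proof (rule sum_mono)
    fix j assume "j \<in> {..<N}"
    then show "b j * (\<alpha> $ j)\<^sup>2 \<le> b k * (\<alpha> $ j)\<^sup>2"
      using b[of j] \<alpha>0 unfolding \<alpha>_def by (cases "j \<le> k") (auto intro: mult_right_mono)
  qed
  also have "\<dots> = b k * (x \<bullet> x)"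
    unfolding scalar_prod_self_orthogonal[OF R x(1)] \<alpha>_def by (simp add: sum_distrib_left)
  finally have "a k * (x \<bullet> x) \<le> b k * (x \<bullet> x)" .
  moreover have "x \<bullet> x > 0"
    using conjugate_square_greater_0_vec[OF x(1)] x(2) by simp
  ultimately show ?thesis
    by (simp add: mult_le_cancel_right_pos)
qed

lemma det_eq_if_rows_diagonal:
  fixes A B :: "'a::comm_ring_1 mat"
  assumes A: "A \<in> carrier_mat n n" and B: "B \<in> carrier_mat n n"
    and zA: "\<And>i j. i < n \<Longrightarrow> j < n \<Longrightarrow> i \<in> Z \<Longrightarrow> j \<noteq> i \<Longrightarrow> A $$ (i, j) = 0"
    and zB: "\<And>i j. i < n \<Longrightarrow> j < n \<Longrightarrow> i \<in> Z \<Longrightarrow> j \<noteq> i \<Longrightarrow> B $$ (i, j) = 0"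
    and eq: "\<And>i j. i < n \<Longrightarrow> j < n \<Longrightarrow> i \<in> Z \<or> j \<notin> Z \<Longrightarrow> A $$ (i, j) = B $$ (i, j)"
  shows "det A = det B"
proof -
  have "(\<Prod>i = 0..<n. A $$ (i, p i)) = (\<Prod>i = 0..<n. B $$ (i, p i))"
    if p: "p permutes {0..<n}" for p
  proof (cases "\<exists>i<n. i \<in> Z \<and> p i \<noteq> i")
    case True
    then obtain i where i: "i < n" "i \<in> Z" "p i \<noteq> i" by auto
    have pi: "p i < n" using p i(1) by (meson atLeastLessThan_iff permutes_in_image zero_le)
    have "A $$ (i, p i) = 0" "B $$ (i, p i) = 0" using zA zB i pi by auto
    then have "(\<Prod>i = 0..<n. A $$ (i, p i)) = 0" "(\<Prod>i = 0..<n. B $$ (i, p i)) = 0"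
      using i(1) by (auto intro!: prod_zero)
    then show ?thesis by simp
  next
    case False
    show ?thesis
    proof (rule prod.cong[OF refl])
      fix i assume i: "i \<in> {0..<n}"
      have pi: "p i < n" using permutes_in_image[OF p] i by auto
      have "i \<in> Z \<or> p i \<notin> Z"
      proof (rule ccontr)
        assume "\<not> (i \<in> Z \<or> p i \<notin> Z)"
        then have "i \<notin> Z" "p i \<in> Z" by auto
        with False pi have "p (p i) = p i" by auto
        then have "p i = i" using permutes_inj[OF p] by (meson injD)
        with \<open>i \<notin> Z\<close> \<open>p i \<in> Z\<close> show False by simp
      qed
      then show "A $$ (i, p i) = B $$ (i, p i)" using eq i pi by auto
    qed
  qed
  then show ?thesis unfolding det_def'[OF A] det_def'[OF B] by (intro sum.cong) auto
qed

lemma char_poly_eq_if_rows_zero: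
  fixes A B :: "'a::comm_ring_1 mat"
  assumes A: "A \<in> carrier_mat N N" and B: "B \<in> carrier_mat N N"
    and zA: "\<And>i j. i < N \<Longrightarrow> j < N \<Longrightarrow> i \<in> Z \<Longrightarrow> A $$ (i, j) = 0"
    and zB: "\<And>i j. i < N \<Longrightarrow> j < N \<Longrightarrow> i \<in> Z \<Longrightarrow> B $$ (i, j) = 0"
    and eq: "\<And>i j. i < N \<Longrightarrow> j < N \<Longrightarrow> i \<in> Z \<or> j \<notin> Z \<Longrightarrow> A $$ (i, j) = B $$ (i, j)"
  shows "char_poly A = char_poly B"
  unfolding char_poly_def
proof (rule det_eq_if_rows_diagonal[of _ N _ Z])
  show "char_poly_matrix A \<in> carrier_mat N N" "char_poly_matrix B \<in> carrier_mat N N"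
    using A B by auto
  show "char_poly_matrix A $$ (i, j) = 0" if "i < N" "j < N" "i \<in> Z" "j \<noteq> i" for i j
    using that A zA[of i j] unfolding char_poly_matrix_def by simp
  show "char_poly_matrix B $$ (i, j) = 0" if "i < N" "j < N" "i \<in> Z" "j \<noteq> i" for i j
    using that B zB[of i j] unfolding char_poly_matrix_def by simp
  show "char_poly_matrix A $$ (i, j) = char_poly_matrix B $$ (i, j)"
    if "i < N" "j < N" "i \<in> Z \<or> j \<notin> Z" for i j
    using that A B eq[of i j] unfolding char_poly_matrix_def by simp
qed

lemma sorted_spectral_decomposition_range:
  assumes "sorted_spectral_decomposition N A Q a" and x: "x \<in> carrier_vec N"
    and kernel: "\<And>j. j < N \<Longrightarrow> a j = 0 \<Longrightarrow> (transpose_mat Q *\<^sub>v x) $ j = 0"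
  obtains y where "y \<in> carrier_vec N" "x = A *\<^sub>v y"
proof -
  from assms(1) have Q: "Q \<in> carrier_mat N N" and QQ: "transpose_mat Q * Q = 1\<^sub>m N"
    and A: "A = Q * mat_diag N a * transpose_mat Q"
    unfolding sorted_spectral_decomposition_def by auto
  define \<beta> where "\<beta> = transpose_mat Q *\<^sub>v x"
  define \<gamma> where "\<gamma> = vec N (\<lambda>j. \<beta> $ j / a j)"
  have \<gamma>: "\<gamma> \<in> carrier_vec N"
    unfolding \<gamma>_def by simp
  have \<beta>: "\<beta> \<in> carrier_vec N"
    using Q x unfolding \<beta>_def by simp
  have "mat_diag N a *\<^sub>v \<gamma> = vec N (\<lambda>j. a j * \<gamma> $ j)"
    by (rule mat_diag_mult_vec[OF \<gamma>])
  also have "\<dots> = \<beta>"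
  proof (rule eq_vecI)
    fix j assume "j < dim_vec \<beta>"
    then have j: "j < N"
      using \<beta> by simp
    \<comment> \<open>Where \<open>a j = 0\<close> the quotient is \<open>0\<close> (division by zero), and so is \<open>\<beta> $ j\<close>.\<close>
    show "vec N (\<lambda>j. a j * \<gamma> $ j) $ j = \<beta> $ j"
      using kernel[folded \<beta>_def, OF j] j by (cases "a j = 0") (simp_all add: \<gamma>_def)
  qed (use \<beta> in simp)
  finally have D\<gamma>: "mat_diag N a *\<^sub>v \<gamma> = \<beta>" .
  have "A *\<^sub>v (Q *\<^sub>v \<gamma>) = Q *\<^sub>v (mat_diag N a *\<^sub>v (transpose_mat Q *\<^sub>v (Q *\<^sub>v \<gamma>)))"
    unfolding A using Q \<gamma> by (simp add: assoc_mult_mat_vec[of _ N N _ N])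
  also have "\<dots> = Q *\<^sub>v \<beta>"
    unfolding orthogonal_mult_vec_cancel(1)[OF Q QQ \<gamma>] D\<gamma> ..
  also have "\<dots> = x"
    unfolding \<beta>_def by (rule orthogonal_mult_vec_cancel(2)[OF Q QQ x])
  finally show ?thesis
    using that Q \<gamma> by (metis mult_mat_vec_carrier)
qed

lemma mat_diag_01_idem:
  fixes p :: "nat \<Rightarrow> 'a::semiring_1"
  assumes p: "\<And>i. i < N \<Longrightarrow> p i = 0 \<or> p i = 1"
  shows "mat_diag N p * mat_diag N p = mat_diag N p"
proof -
  have "p i * p i = p i" if "i < N" for i
    using p[OF that] by auto
  then show ?thesis
    unfolding mat_diag_diag by (intro eq_matI) (auto simp: mat_diag_def)
qed

lemma char_poly_mat_diag_01_mult:
  fixes G :: "'a::comm_ring_1 mat"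
  assumes G: "G \<in> carrier_mat N N" and p: "\<And>i. i < N \<Longrightarrow> p i = 0 \<or> p i = 1"
  shows "char_poly (mat_diag N p * G) = char_poly (mat_diag N p * G * mat_diag N p)"
proof (rule char_poly_eq_if_rows_zero[where Z = "{i. p i = 0}"])
  have "(mat_diag N p * G) $$ (i, j) = p i * G $$ (i, j)"
    and "(mat_diag N p * G * mat_diag N p) $$ (i, j) = p i * G $$ (i, j) * p j"
    if "i < N" "j < N" for i j
    using that G by (simp_all add: mat_diag_mult_left[of _ N N] mat_diag_mult_right[of _ N N])
  then show "(mat_diag N p * G) $$ (i, j) = (mat_diag N p * G * mat_diag N p) $$ (i, j)"
    if "i < N" "j < N" "i \<in> {i. p i = 0} \<or> j \<notin> {i. p i = 0}" for i j
    using that p[of j] by auto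
qed (use G in \<open>auto simp: mat_diag_mult_left[of _ N N] mat_diag_mult_right[of _ N N]\<close>)

lemma quadratic_form_mat_diag_01_conj:
  fixes G :: "real mat"
  assumes G: "G \<in> carrier_mat N N" and p: "\<And>i. i < N \<Longrightarrow> p i = 0 \<or> p i = 1"
    and y: "y \<in> carrier_vec N"
  defines "P \<equiv> mat_diag N p"
  defines "x \<equiv> (P * G * P) *\<^sub>v y"
  shows "x \<bullet> ((P * G * P) *\<^sub>v x) = x \<bullet> (G *\<^sub>v x)"
proof -
  have P: "P \<in> carrier_mat N N" "transpose_mat P = P" and PP: "P * P = P"
    unfolding P_def using mat_diag_01_idem[OF p] by simp_all
  have x: "x \<in> carrier_vec N"
    unfolding x_def using P(1) G y by (meson mult_carrier_mat mult_mat_vec_carrier)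
  have "P * (P * G * P) = (P * P) * G * P"
    using P G by (simp add: assoc_mult_mat[of _ N N _ N _ N])
  then have "P *\<^sub>v x = x"
    unfolding x_def PP using P G y by (metis assoc_mult_mat_vec mult_carrier_mat)
  moreover have "x \<bullet> ((P * G * P) *\<^sub>v x) = x \<bullet> (P *\<^sub>v (G *\<^sub>v (P *\<^sub>v x)))"
    using P G x by (simp add: assoc_mult_mat_vec[of _ N N _ N])
  moreover have "x \<bullet> (P *\<^sub>v (G *\<^sub>v x)) = (P *\<^sub>v x) \<bullet> (G *\<^sub>v x)"
    using transpose_vec_mult_scalar[OF P(1) mult_mat_vec_carrier[OF G x] x] P(2) by simp
  ultimately show ?thesis
    by simp
qed

lemma sorted_spectral_decomposition_nonneg:
  assumes "sorted_spectral_decomposition N H R b" and k: "k < N"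
    and psd: "\<And>x. x \<in> carrier_vec N \<Longrightarrow> 0 \<le> x \<bullet> (H *\<^sub>v x)"
  shows "0 \<le> b k"
proof -
  from assms(1) have R: "R \<in> carrier_mat N N" "transpose_mat R * R = 1\<^sub>m N"
    and H: "H = R * mat_diag N b * transpose_mat R"
    unfolding sorted_spectral_decomposition_def by auto
  let ?e = "unit_vec N k :: real vec"
  have Re: "R *\<^sub>v ?e \<in> carrier_vec N"
    using R by simp
  have "0 \<le> (R *\<^sub>v ?e) \<bullet> (H *\<^sub>v (R *\<^sub>v ?e))"
    by (rule psd[OF Re])
  also have "\<dots> = (\<Sum>j<N. b j * (?e $ j)\<^sup>2)"
    unfolding H quadratic_form_conj_mat_diag[OF R(1) Re] orthogonal_mult_vec_cancel(1)[OF R unit_vec_carrier] ..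
  also have "\<dots> = (\<Sum>j<N. if j = k then b k else 0)"
    using k by (intro sum.cong) auto
  finally show ?thesis
    using k by simp
qed

lemma eigenvalues_sorted_mat_diag_01_mult_le:
  fixes G H :: "real mat" and p :: "nat \<Rightarrow> real"
  assumes G: "G \<in> carrier_mat N N" "transpose_mat G = G"
    and H: "H \<in> carrier_mat N N" "transpose_mat H = H"
    and p: "\<And>i. i < N \<Longrightarrow> p i = 0 \<or> p i = 1"
    and G_le_H: "\<And>x. x \<in> carrier_vec N \<Longrightarrow> x \<bullet> (G *\<^sub>v x) \<le> x \<bullet> (H *\<^sub>v x)"
    and H_psd: "\<And>x. x \<in> carrier_vec N \<Longrightarrow> 0 \<le> x \<bullet> (H *\<^sub>v x)"
    and k: "k < N"
  shows "eigenvalues_sorted (mat_diag N p * G) ! k \<le> eigenvalues_sorted H ! k"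
proof -
  define S where "S = mat_diag N p * G * mat_diag N p"
  have "S \<in> carrier_mat N N"
    unfolding S_def using G(1) by (meson mat_diag_dim mult_carrier_mat)
  moreover have "transpose_mat S = S"
    using transpose_conj_symmetric[OF mat_diag_dim G] unfolding S_def by simp
  ultimately
  obtain Q a where SQ: "sorted_spectral_decomposition N S Q a"
    using real_symmetric_spectral_decomposition by blast
  obtain R b where HR: "sorted_spectral_decomposition N H R b"
    using real_symmetric_spectral_decomposition[OF H] by blast
  have "eigenvalues_sorted (mat_diag N p * G) = map a [0..<N]"
    using eigenvalues_sorted_spectral_decomposition[OF SQ] char_poly_mat_diag_01_mult[OF G(1) p]
    unfolding eigenvalues_sorted_def S_def by simp
  moreover have "eigenvalues_sorted H = map b [0..<N]"
    by (rule eigenvalues_sorted_spectral_decomposition[OF HR])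
  moreover have "a k \<le> b k"
  proof (cases "a k \<le> 0")
    case True
    then show ?thesis
      using sorted_spectral_decomposition_nonneg[OF HR k H_psd] by simp
  next
    case False
    show ?thesis
    proof (rule sorted_spectral_decomposition_eigenvalue_le[OF SQ HR k])
      fix x assume x: "x \<in> carrier_vec N" and low: "\<forall>j<k. (transpose_mat Q *\<^sub>v x) $ j = 0"
      \<comment> \<open>As \<open>a\<close> is positive from \<open>k\<close> on, \<open>x\<close> lies in the range of \<open>S\<close>.\<close>
      have "a j = 0 \<Longrightarrow> (transpose_mat Q *\<^sub>v x) $ j = 0" if "j < N" for j
        using SQ False low that unfolding sorted_spectral_decomposition_def
        by (metis linorder_not_less order_refl)
      then obtain y where y: "y \<in> carrier_vec N" "x = S *\<^sub>v y"
        using sorted_spectral_decomposition_range[OF SQ x] by blast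
      have "x \<bullet> (S *\<^sub>v x) = x \<bullet> (G *\<^sub>v x)"
        using quadratic_form_mat_diag_01_conj[of G N p y, OF G(1) p y(1)] y(2) unfolding S_def by simp
      also have "\<dots> \<le> x \<bullet> (H *\<^sub>v x)"
        by (rule G_le_H[OF x])
      finally show "x \<bullet> (S *\<^sub>v x) \<le> x \<bullet> (H *\<^sub>v x)" .
    qed
  qed
  ultimately show ?thesis
    using k by simp
qed

section \<open>The up-Laplacian as a weighted Gram matrix of coboundaries\<close>

lemma coboundary_indicator:
  fixes F Fb :: "'v::linorder set"
  assumes F: "card F = n + 1" and Fb: "card Fb = n + 2"
  shows "coboundary (\<lambda>G. if G = F then 1 else 0) Fb = (if F \<subset> Fb then bsign F Fb else 0)"
proof -
  have finFb: "finite Fb" using Fb card.infinite by fastforce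
  show ?thesis
  proof (cases "F \<subset> Fb")
    case True
    have finF: "finite F" using F card.infinite by fastforce
    have "card (Fb - F) = 1" using True F Fb finF by (simp add: card_Diff_subset)
    then obtain u where u: "Fb - F = {u}" by (auto simp: card_Suc_eq)
    have uFb: "u \<in> Fb" using u by auto
    have iff: "(Fb - {v} = F) = (v = u)" if v: "v \<in> Fb" for v
      using u True v by blast
    have "coboundary (\<lambda>G. if G = F then 1 else 0) Fb = (\<Sum>v\<in>Fb. if v = u then (-1) ^ vpos Fb v else 0)"
      unfolding coboundary_def by (rule sum.cong) (auto simp: iff)
    also have "\<dots> = (-1) ^ vpos Fb u" using finFb uFb by simp
    also have "\<dots> = bsign F Fb" unfolding bsign_def u by simp
    finally show ?thesis using True by simp
  next
    case False
    have "Fb - {v} \<noteq> F" if "v \<in> Fb" for v using False that by blast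
    then show ?thesis using False unfolding coboundary_def by (auto intro!: sum.neutral)
  qed
qed

lemma up_laplacian_indicator:
  fixes C :: "'v::linorder set set"
  assumes fin: "finite (faces (n+1) C)" and F: "card F = n + 1" and G: "card G = n + 1"
    and w: "w F = 0 \<or> w F = 1"
  shows "up_laplacian C w n (\<lambda>H. if H = G then 1 else 0) F
    = w F * (\<Sum>Fb\<in>faces (n+1) C. w Fb * coboundary (\<lambda>H. if H = F then 1 else 0) Fb
                                       * coboundary (\<lambda>H. if H = G then 1 else 0) Fb)"
proof (cases "w F = 0")
  case True
  then show ?thesis unfolding up_laplacian_def coboundary_adj_def by simp
next
  case False
  then have w1: "w F = 1" using w by simp
  have cF: "coboundary (\<lambda>H. if H = F then 1 else 0) Fb = (if F \<subset> Fb then bsign F Fb else 0)"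
    if "Fb \<in> faces (n+1) C" for Fb
    by (rule coboundary_indicator[OF F]) (use that in \<open>simp add: faces_def\<close>)
  have "up_laplacian C w n (\<lambda>H. if H = G then 1 else 0) F
      = (\<Sum>Fb\<in>{Fb \<in> faces (n + 1) C. F \<subset> Fb}. w Fb * bsign F Fb * coboundary (\<lambda>H. if H = G then 1 else 0) Fb)"
    unfolding up_laplacian_def coboundary_adj_def using w1 by simp
  also have "\<dots> = (\<Sum>Fb\<in>faces (n + 1) C. if F \<subset> Fb then w Fb * bsign F Fb * coboundary (\<lambda>H. if H = G then 1 else 0) Fb else 0)"
    by (rule sum.inter_filter[OF fin])
  also have "\<dots> = (\<Sum>Fb\<in>faces (n+1) C. w Fb * coboundary (\<lambda>H. if H = F then 1 else 0) Fb
                                       * coboundary (\<lambda>H. if H = G then 1 else 0) Fb)"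
    by (rule sum.cong) (auto simp: cF)
  finally show ?thesis using w1 by simp
qed

definition coboundary_gram :: "'v::linorder set set \<Rightarrow> ('v set \<Rightarrow> real) \<Rightarrow> 'v set list \<Rightarrow> real mat"
  where "coboundary_gram E w xs = mat (length xs) (length xs) (\<lambda>(i, j).
     \<Sum>Fb\<in>E. w Fb * coboundary (\<lambda>H. if H = xs ! i then 1 else 0) Fb
                 * coboundary (\<lambda>H. if H = xs ! j then 1 else 0) Fb)"

lemma coboundary_gram_carrier [simp]:
  "coboundary_gram E w xs \<in> carrier_mat (length xs) (length xs)"
  unfolding coboundary_gram_def by simp

lemma transpose_coboundary_gram [simp]:
  "transpose_mat (coboundary_gram E w xs) = coboundary_gram E w xs"
  by (rule eq_matI) (auto simp: coboundary_gram_def mult_ac)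

lemma quadratic_form_coboundary_gram:
  assumes x: "x \<in> carrier_vec (length xs)"
  shows "x \<bullet> (coboundary_gram E w xs *\<^sub>v x)
       = (\<Sum>Fb\<in>E. w Fb * (\<Sum>i<length xs. coboundary (\<lambda>H. if H = xs ! i then 1 else 0) Fb * x $ i)\<^sup>2)"
proof -
  define c where "c = (\<lambda>i. coboundary (\<lambda>H. if H = xs ! i then 1 else 0))"
  define N where "N = length xs"
  have "x \<bullet> (coboundary_gram E w xs *\<^sub>v x)
      = (\<Sum>i<N. x $ i * (\<Sum>j<N. (\<Sum>Fb\<in>E. w Fb * c i Fb * c j Fb) * x $ j))"
    using x by (auto simp: coboundary_gram_def c_def N_def scalar_prod_def atLeast0LessThan
        intro!: sum.cong)
  also have "\<dots> = (\<Sum>Fb\<in>E. \<Sum>i<N. \<Sum>j<N. w Fb * (c i Fb * x $ i) * (c j Fb * x $ j))"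
    by (simp add: sum_distrib_left sum_distrib_right mult_ac sum.swap[of _ E])
  also have "\<dots> = (\<Sum>Fb\<in>E. w Fb * (\<Sum>i<N. c i Fb * x $ i)\<^sup>2)"
    by (simp add: power2_eq_square sum_product sum_distrib_left mult_ac)
  finally show ?thesis
    unfolding c_def N_def .
qed

lemma quadratic_form_coboundary_gram_nonneg:
  assumes "\<And>Fb. Fb \<in> E \<Longrightarrow> 0 \<le> w Fb" and "x \<in> carrier_vec (length xs)"
  shows "0 \<le> x \<bullet> (coboundary_gram E w xs *\<^sub>v x)"
  unfolding quadratic_form_coboundary_gram[OF assms(2)] using assms(1) by (auto intro!: sum_nonneg)

lemma quadratic_form_coboundary_gram_mono:
  assumes "finite E'" and "E \<subseteq> E'" and "\<And>Fb. Fb \<in> E \<Longrightarrow> w Fb \<le> w' Fb"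
    and "\<And>Fb. Fb \<in> E' \<Longrightarrow> 0 \<le> w' Fb" and x: "x \<in> carrier_vec (length xs)"
  shows "x \<bullet> (coboundary_gram E w xs *\<^sub>v x) \<le> x \<bullet> (coboundary_gram E' w' xs *\<^sub>v x)"
proof -
  let ?q = "\<lambda>Fb. (\<Sum>i<length xs. coboundary (\<lambda>H. if H = xs ! i then 1 else 0) Fb * x $ i)\<^sup>2"
  have "(\<Sum>Fb\<in>E. w Fb * ?q Fb) \<le> (\<Sum>Fb\<in>E. w' Fb * ?q Fb)"
    using assms(3) by (intro sum_mono mult_right_mono) auto
  also have "\<dots> \<le> (\<Sum>Fb\<in>E'. w' Fb * ?q Fb)"
    using assms(1,2,4) by (intro sum_mono2) auto
  finally show ?thesis
    unfolding quadratic_form_coboundary_gram[OF x] .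
qed

lemma face_enum:
  assumes "finite (faces n C)"
  shows "distinct (face_enum n C)" and "set (face_enum n C) = faces n C"
proof -
  have "\<exists>xs. distinct xs \<and> set xs = faces n C"
    using finite_distinct_list[OF assms] by metis
  then have "distinct (face_enum n C) \<and> set (face_enum n C) = faces n C"
    unfolding face_enum_def by (rule someI_ex)
  then show "distinct (face_enum n C)" and "set (face_enum n C) = faces n C"
    by auto
qed

lemma length_face_enum:
  assumes "finite C"
  shows "length (face_enum n C) = card (faces n C)"
  using face_enum[of n C] assms distinct_card unfolding faces_def by fastforce

lemma up_laplacian_mat_eq_coboundary_gram:
  fixes C :: "'v::linorder set set"
  assumes C: "finite C" and w: "\<forall>F\<in>faces n C. w F = 0 \<or> w F = 1"
  defines "xs \<equiv> face_enum n C"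
  shows "up_laplacian_mat C w n
       = mat_diag (length xs) (\<lambda>i. w (xs ! i)) * coboundary_gram (faces (n + 1) C) w xs"
proof -
  have fin: "finite (faces j C)" for j
    using C unfolding faces_def by simp
  have xs: "xs ! i \<in> faces n C" if "i < length xs" for i
    using face_enum(2)[OF fin] that unfolding xs_def by (metis nth_mem)
  then have "card (xs ! i) = n + 1" if "i < length xs" for i
    using that unfolding faces_def by blast
  then show ?thesis
    unfolding up_laplacian_mat_def Let_def xs_def[symmetric]
    using up_laplacian_indicator[OF fin] xs w
    by (intro eq_matI) (auto simp: mat_diag_mult_left[of _ "length xs" "length xs"] coboundary_gram_def)
qed

lemma up_laplacian_mat_unit_weight:
  fixes C :: "'v::linorder set set"
  assumes "finite C"
  shows "up_laplacian_mat C (\<lambda>_. 1) n = coboundary_gram (faces (n + 1) C) (\<lambda>_. 1) (face_enum n C)"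
  using up_laplacian_mat_eq_coboundary_gram[OF assms, of n "\<lambda>_. 1"]
  by (simp add: left_mult_one_mat[OF coboundary_gram_carrier])

theorem corollary2p16:
  fixes K L :: "'v::linorder set set" and wL :: "'v set \<Rightarrow> real" and n :: nat
  assumes "simplicial_complex K"
    and "subcomplex L K"
    and "faces n L = faces n K"
    and "\<forall>F\<in>L. wL F \<in> {0, 1}"
  shows "\<forall>k < card (faces n K).
           eigenvalues_sorted (up_laplacian_mat L wL n) ! k
             \<le> eigenvalues_sorted (up_laplacian_mat K (\<lambda>_. 1) n) ! k"
proof -
  have "finite K" and "L \<subseteq> K"
    using assms(1,2) unfolding simplicial_complex_def subcomplex_def by auto
  then have "finite L"
    by (rule finite_subset[rotated])
  define xs where "xs = face_enum n L"
  have xs_K: "face_enum n K = xs"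
    unfolding xs_def face_enum_def assms(3) ..
  have wL: "\<forall>F\<in>L. wL F = 0 \<or> wL F = 1"
    using assms(4) by auto
  have wL_xs: "wL (xs ! i) = 0 \<or> wL (xs ! i) = 1" if "i < length xs" for i
    using wL face_enum(2)[of n L] \<open>finite L\<close> nth_mem[OF that] unfolding xs_def faces_def by auto
  have gram_le: "x \<bullet> (coboundary_gram (faces (n + 1) L) wL xs *\<^sub>v x)
      \<le> x \<bullet> (coboundary_gram (faces (n + 1) K) (\<lambda>_. 1) xs *\<^sub>v x)"
    if "x \<in> carrier_vec (length xs)" for x
    using that wL \<open>L \<subseteq> K\<close> \<open>finite K\<close>
    by (intro quadratic_form_coboundary_gram_mono) (auto simp: faces_def)
  have gram_nonneg: "0 \<le> x \<bullet> (coboundary_gram (faces (n + 1) K) (\<lambda>_. 1) xs *\<^sub>v x)"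
    if "x \<in> carrier_vec (length xs)" for x
    using that by (intro quadratic_form_coboundary_gram_nonneg) auto
  have "\<forall>k < length xs.
      eigenvalues_sorted (mat_diag (length xs) (\<lambda>i. wL (xs ! i)) * coboundary_gram (faces (n + 1) L) wL xs) ! k
      \<le> eigenvalues_sorted (coboundary_gram (faces (n + 1) K) (\<lambda>_. 1) xs) ! k"
    using eigenvalues_sorted_mat_diag_01_mult_le[where p = "\<lambda>i. wL (xs ! i)",
        OF coboundary_gram_carrier transpose_coboundary_gram coboundary_gram_carrier
        transpose_coboundary_gram wL_xs gram_le gram_nonneg] by blast
  moreover have "up_laplacian_mat L wL n
      = mat_diag (length xs) (\<lambda>i. wL (xs ! i)) * coboundary_gram (faces (n + 1) L) wL xs"
    using up_laplacian_mat_eq_coboundary_gram[OF \<open>finite L\<close>, of n wL] wL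
    unfolding xs_def faces_def by auto
  moreover have "up_laplacian_mat K (\<lambda>_. 1) n = coboundary_gram (faces (n + 1) K) (\<lambda>_. 1) xs"
    using up_laplacian_mat_unit_weight[OF \<open>finite K\<close>, of n] unfolding xs_K .
  moreover have "card (faces n K) = length xs"
    using length_face_enum[OF \<open>finite K\<close>, of n] unfolding xs_K by simp
  ultimately show ?thesis
    by simp
qed

end
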